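(* Let $k\ge2$ and $\ell\ge1$. If $Z'_k(\ell)$ has a strictly decreasing palindromic subsequence of length $d$ with no zero terms, then $Z'_k(\ell+2)$ has a strictly decreasing palindromic subsequence of length $kd+k-1$ with no zero terms.
   Context: For integers $k\ge2$, $L\ge1$ and $0\le x<k^L$, $\mathrm{rev}_{k,L}(x)$ is the integer whose $L$-digit (zero-padded) base-$k$ representation is the reversal of that of $x$. $Z'_k(L)$ denotes the sequence $\mathrm{rev}_{k,L}(0),\mathrm{rev}_{k,L}(1),\dots,\mathrm{rev}_{k,L}(k^L-1)$ (the radix-$k$ digit-reversal permutation; it is the stable configuration $Z_k(L)$ of labeled chip-firing on the directed $k$-ary tree with $1$ subtracted from each entry). A sequence $b_1,\dots,b_d$ of integers in $\{0,\dots,k^L-1\}$ is palindromic (with respect to $k$ and $L$) if $\mathrm{rev}_{k,L}(b_i)=b_{d+1-i}$ for all $i$. *)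

theory Defs
  imports Main "HOL-Library.Sublist"
begin

text \<open>Radix-k digit reversal of the L-digit (zero-padded) base-k representation of x.
  Digit i of x (from the least significant end) is (x div k^i) mod k; it moves to
  position L-1-i.\<close>
definition rev_digits :: "nat \<Rightarrow> nat \<Rightarrow> nat \<Rightarrow> nat" where
  "rev_digits k L x = (\<Sum>i<L. ((x div k ^ i) mod k) * k ^ (L - 1 - i))"

definition Zprime :: "nat \<Rightarrow> nat \<Rightarrow> nat list" where
  "Zprime k L = map (rev_digits k L) [0..<k ^ L]"

definition palindromic :: "nat \<Rightarrow> nat \<Rightarrow> nat list \<Rightarrow> bool" where
  "palindromic k L b \<longleftrightarrow> (\<forall>i < length b. rev_digits k L (b ! i) = b ! (length b - 1 - i))"

end

theory Submission
  imports Defs "HOL-Library.Product_Lexorder"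
begin

text \<open>A strictly decreasing palindromic subsequence of Z'_k(L) is determined by its set of
  values S: S is closed under rev_{k,L}, and rev_{k,L} reverses the order on S. Conversely, listing
  such a set in decreasing order gives such a subsequence, since rev_{k,L} maps the list onto its
  reversal, which is increasing and hence a subsequence of 0, ..., k^L - 1.

  Numbers below k^(l+2) are digit triples (a, y, e) with a, e < k and y < k^l, whose numerical order is
  the lexicographic one, and rev_{k,l+2} (a, y, e) = (e, rev_{k,l} y, a). For such a value set B of size
  d with 0 \<notin> B, the triples (a, y, k - 1 - a) with a < k, y \<in> B, and (a, 0, k - a) with
  0 < a < k, form a value set of size kd + k - 1 not containing 0.\<close>

lemma rev_digits_Suc:
  "rev_digits k (Suc L) x = x mod k * k ^ L + rev_digits k L (x div k)"
  unfolding rev_digits_def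
  by (subst sum.lessThan_Suc_shift) (simp add: div_mult2_eq mult.commute)

lemma rev_digits_Suc':
  "rev_digits k (Suc L) x = rev_digits k L x * k + x div k ^ L mod k"
proof -
  have "Suc L - 1 - i = Suc (L - 1 - i)" if "i < L" for i
    using that by simp
  then show ?thesis
    unfolding rev_digits_def by (simp add: sum_distrib_left mult_ac)
qed

lemma rev_digits_less_power:
  assumes "0 < k" shows "rev_digits k L x < k ^ L"
proof (induction L arbitrary: x)
  case 0
  then show ?case by (simp add: rev_digits_def)
next
  case (Suc L)
  have "x mod k * k ^ L + rev_digits k L (x div k) < (x mod k + 1) * k ^ L"
    using Suc.IH by simp
  also have "\<dots> \<le> k * k ^ L"
    using assms by (intro mult_right_mono) (simp_all add: Suc_le_eq)
  finally show ?case by (simp add: rev_digits_Suc)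
qed

lemma rev_digits_0 [simp]: "rev_digits k L 0 = 0"
  by (simp add: rev_digits_def)

lemma rev_digits_mult_power_add:
  assumes "0 < k" shows "rev_digits k L (m * k ^ L + x) = rev_digits k L x"
  unfolding rev_digits_def
proof (rule sum.cong)
  fix i assume "i \<in> {..<L}"
  define j where "j = L - Suc i"
  then have L: "L = i + Suc j"
    using \<open>i \<in> {..<L}\<close> by simp
  have "m * k ^ L + x = x + k ^ i * (k * (k ^ j * m))"
    by (simp add: L power_add mult_ac)
  then have "(m * k ^ L + x) div k ^ i = k * (k ^ j * m) + x div k ^ i"
    using assms by (simp only: div_mult_self2 power_not_zero) simp
  then show "(m * k ^ L + x) div k ^ i mod k * k ^ (L - 1 - i) = x div k ^ i mod k * k ^ (L - 1 - i)"
    by simp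
qed simp

lemma mult_add_less_mult_add:
  fixes a a' u v K :: nat
  assumes "u < K" "a < a'"
  shows "a * K + u < a' * K + v"
proof -
  have "a * K + u < Suc a * K" using assms(1) by simp
  also have "\<dots> \<le> a' * K" using assms(2) by (intro mult_right_mono) simp_all
  finally show ?thesis by simp
qed

definition wrap_digits :: "nat \<Rightarrow> nat \<Rightarrow> nat \<times> nat \<times> nat \<Rightarrow> nat" where
  "wrap_digits k l = (\<lambda>(a, y, e). (a * k ^ l + y) * k + e)"

lemma strict_mono_on_wrap_digits:
  "strict_mono_on (UNIV \<times> {..<k ^ l} \<times> {..<k}) (wrap_digits k l)"
proof (rule strict_mono_onI, clarify)
  fix a y e a' y' e' :: nat
  assume bounds: "y < k ^ l" "e < k" and "(a, y, e) < (a', y', e')"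
  then have "a * k ^ l + y < a' * k ^ l + y' \<or> a * k ^ l + y = a' * k ^ l + y' \<and> e < e'"
    by (auto simp: less_prod_def' intro: mult_add_less_mult_add)
  then show "wrap_digits k l (a, y, e) < wrap_digits k l (a', y', e')"
    unfolding wrap_digits_def using bounds(2) by (auto intro: mult_add_less_mult_add)
qed

lemma wrap_digits_image_subset:
  "wrap_digits k l ` ({..<k} \<times> {..<k ^ l} \<times> {..<k}) \<subseteq> {..<k ^ (l + 2)}"
proof (rule image_subsetI)
  fix t assume "t \<in> {..<k} \<times> {..<k ^ l} \<times> {..<k}"
  then obtain a y e where t: "t = (a, y, e)" and "a < k" "y < k ^ l" "e < k"
    by auto
  then have "a * k ^ l + y < k * k ^ l"
    using mult_add_less_mult_add[of y "k ^ l" a k 0] by simp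
  then have "(a * k ^ l + y) * k + e < (k * k ^ l) * k"
    using mult_add_less_mult_add[of e k "a * k ^ l + y" "k * k ^ l" 0] \<open>e < k\<close>
    by (simp add: mult.commute)
  then show "wrap_digits k l t \<in> {..<k ^ (l + 2)}"
    by (simp add: t wrap_digits_def power_add power2_eq_square mult_ac)
qed

lemma rev_digits_wrap_digits:
  assumes "a < k" "y < k ^ l" "e < k"
  shows "rev_digits k (l + 2) (wrap_digits k l (a, y, e)) = wrap_digits k l (e, rev_digits k l y, a)"
proof -
  have k: "0 < k" using assms(1) by simp
  have "rev_digits k (l + 2) (wrap_digits k l (a, y, e))
      = e * k ^ Suc l + rev_digits k (Suc l) (a * k ^ l + y)"
    using assms by (simp add: wrap_digits_def rev_digits_Suc)
  also have "rev_digits k (Suc l) (a * k ^ l + y) = rev_digits k l y * k + a"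
    using assms k by (simp add: rev_digits_Suc' rev_digits_mult_power_add)
  finally show ?thesis
    by (simp add: wrap_digits_def algebra_simps)
qed

definition extension_triples :: "nat \<Rightarrow> nat set \<Rightarrow> (nat \<times> nat \<times> nat) set" where
  "extension_triples k B =
     (\<lambda>(a, y). (a, y, k - 1 - a)) ` ({..<k} \<times> B) \<union> (\<lambda>a. (a, 0, k - a)) ` {1..<k}"

lemma card_extension_triples:
  assumes "finite B" "0 \<notin> B"
  shows "card (extension_triples k B) = k * card B + k - 1"
proof -
  have "card ((\<lambda>(a, y). (a, y, k - 1 - a)) ` ({..<k} \<times> B)) = k * card B"
    by (subst card_image) (auto simp: inj_on_def card_cartesian_product)
  moreover have "card ((\<lambda>a. (a, 0::nat, k - a)) ` {1..<k}) = k - 1"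
    by (subst card_image) (auto simp: inj_on_def)
  ultimately have "card (extension_triples k B) = k * card B + (k - 1)"
    unfolding extension_triples_def using assms by (subst card_Un_disjoint) auto
  then show ?thesis by (cases k) simp_all
qed

lemma extension_triples_subset:
  assumes "B \<subseteq> {..<k ^ l}"
  shows "extension_triples k B \<subseteq> {..<k} \<times> {..<k ^ l} \<times> {..<k}"
  using assms by (auto simp: extension_triples_def)

lemma extension_triples_reversal:
  fixes f :: "nat \<Rightarrow> nat"
  assumes "f ` B \<subseteq> B" "strict_antimono_on B f" "0 \<notin> B" "f 0 = 0"
  defines "\<sigma> \<equiv> \<lambda>(a, y, e). (e, f y, a)"
  shows "\<sigma> ` extension_triples k B \<subseteq> extension_triples k B"
    and "strict_antimono_on (extension_triples k B) \<sigma>"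
proof -
  \<comment> \<open>As \<open>0 \<notin> B\<close>, \<open>(a, 0, k - a)\<close> is the least triple with leading digit \<open>a\<close>, and its image
    \<open>(k - a, 0, a)\<close> the least one with leading digit \<open>k - a\<close>.\<close>
  show "\<sigma> ` extension_triples k B \<subseteq> extension_triples k B"
    using assms unfolding extension_triples_def \<sigma>_def by (force simp: image_iff)
  show "strict_antimono_on (extension_triples k B) \<sigma>"
    unfolding extension_triples_def \<sigma>_def
    using assms by (auto simp: less_prod_def' monotone_on_def)
qed

lemma zero_notin_wrap_digits_extension_triples:
  assumes "B \<subseteq> {..<k ^ l}" "0 \<notin> B"
  shows "0 \<notin> wrap_digits k l ` extension_triples k B"
proof
  let ?D = "{..<k} \<times> {..<k ^ l} \<times> {..<k}"
  assume "0 \<in> wrap_digits k l ` extension_triples k B"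
  then obtain t where t: "t \<in> extension_triples k B" "wrap_digits k l t = 0"
    by auto
  then have "t \<in> ?D" "(0, 0, 0) \<in> ?D"
    using extension_triples_subset[OF assms(1)] by auto
  moreover have "wrap_digits k l t = wrap_digits k l (0, 0, 0)"
    using t(2) by (simp add: wrap_digits_def)
  moreover have "inj_on (wrap_digits k l) ?D"
    using strict_mono_on_wrap_digits
    by (intro strict_mono_on_imp_inj_on) (rule monotone_on_subset, auto)
  ultimately have "t = (0, 0, 0)"
    by (auto dest: inj_onD)
  then show False
    using t(1) assms(2) by (auto simp: extension_triples_def)
qed

lemma map_antitone_rev_sorted_list_of_set:
  fixes F :: "'a::linorder \<Rightarrow> 'a"
  assumes "finite S" "F ` S \<subseteq> S" "strict_antimono_on S F"
  shows "map F (rev (sorted_list_of_set S)) = sorted_list_of_set S"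
proof -
  let ?s = "sorted_list_of_set S"
  have "inj_on F S"
    using assms(3) strict_antimono_iff_antimono by blast
  then have "F ` S = S"
    using assms(1,2) by (simp add: card_image card_subset_eq)
  moreover have "sorted_wrt (\<lambda>x y. F y < F x) ?s"
    using assms(1,3) by (intro sorted_wrt_mono_rel[OF _ strict_sorted_list_of_set])
      (auto simp: monotone_on_def)
  ultimately have "sorted_wrt (<) (map F (rev ?s)) \<and> set (map F (rev ?s)) = S
      \<and> length (map F (rev ?s)) = card S"
    using assms(1) by (simp add: sorted_wrt_map sorted_wrt_rev)
  then have "sorted_list_of_set S = map F (rev ?s)"
    using sorted_list_of_set_unique[OF assms(1)] by blast
  then show ?thesis ..
qed

lemma strict_antimono_on_image_conjugate:
  fixes g :: "'a::linorder \<Rightarrow> 'b::linorder"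
  assumes "strict_mono_on D g" "T \<subseteq> D" "\<sigma> ` T \<subseteq> T" "strict_antimono_on T \<sigma>"
    and "\<And>t. t \<in> T \<Longrightarrow> F (g t) = g (\<sigma> t)"
  shows "F ` g ` T \<subseteq> g ` T" and "strict_antimono_on (g ` T) F"
proof -
  show "F ` g ` T \<subseteq> g ` T"
    using assms(3,5) by force
  show "strict_antimono_on (g ` T) F"
  proof (rule monotone_onI, clarify)
    fix t t' assume "t \<in> T" "t' \<in> T" "g t < g t'"
    then have "t < t'"
      using assms(1,2) strict_mono_on_less by blast
    then have "\<sigma> t' < \<sigma> t"
      using \<open>t \<in> T\<close> \<open>t' \<in> T\<close> assms(4) by (simp add: monotone_on_def)
    then show "F (g t') < F (g t)"
      using \<open>t \<in> T\<close> \<open>t' \<in> T\<close> assms by (simp add: strict_mono_on_less subset_iff)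
  qed
qed

definition palindromic_set :: "nat \<Rightarrow> nat \<Rightarrow> nat set \<Rightarrow> bool" where
  "palindromic_set k L S \<longleftrightarrow> finite S \<and> S \<subseteq> {..<k ^ L} \<and>
     rev_digits k L ` S \<subseteq> S \<and> strict_antimono_on S (rev_digits k L)"

lemma palindromic_set_of_list:
  assumes "0 < k" "subseq b (Zprime k L)" "sorted_wrt (>) b" "palindromic k L b"
  shows "palindromic_set k L (set b)"
proof -
  let ?n = "length b"
  have rev_nth: "rev_digits k L (b ! i) = b ! (?n - 1 - i)" if "i < ?n" for i
    using assms(4) that by (simp add: palindromic_def)
  have nth_less_iff: "b ! i < b ! j \<longleftrightarrow> j < i" if "i < ?n" "j < ?n" for i j
    using that assms(3) by (metis linorder_neqE_nat order.asym sorted_wrt_nth_less)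
  have "set b \<subseteq> set (Zprime k L)"
    using list_emb_set[OF assms(2)] by blast
  then have "set b \<subseteq> {..<k ^ L}"
    using rev_digits_less_power[OF assms(1)] by (auto simp: Zprime_def)
  moreover have "rev_digits k L ` set b \<subseteq> set b"
  proof (rule image_subsetI)
    fix x assume "x \<in> set b"
    then obtain i where "i < ?n" "x = b ! i"
      by (auto simp: in_set_conv_nth)
    then show "rev_digits k L x \<in> set b"
      by (simp add: rev_nth)
  qed
  moreover have "strict_antimono_on (set b) (rev_digits k L)"
    by (rule monotone_onI) (auto simp: in_set_conv_nth rev_nth nth_less_iff)
  ultimately show ?thesis
    by (simp add: palindromic_set_def)
qed

lemma palindromic_set_enumeration:
  assumes "palindromic_set k L S"
  obtains c where "set c = S" "length c = card S" "subseq c (Zprime k L)"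
    "sorted_wrt (>) c" "palindromic k L c"
proof
  let ?F = "rev_digits k L" and ?s = "sorted_list_of_set S"
  have fin: "finite S" and bound: "S \<subseteq> {..<k ^ L}"
    using assms by (simp_all add: palindromic_set_def)
  have map_c: "map ?F (rev ?s) = ?s"
    using assms by (simp add: palindromic_set_def map_antitone_rev_sorted_list_of_set)
  then have map_s: "map ?F ?s = rev ?s"
    by (metis rev_map rev_rev_ident)
  have "subseq ?s [0..<k ^ L]"
    using fin bound by (intro sorted_subset_imp_subseq) auto
  then show "subseq (rev ?s) (Zprime k L)"
    unfolding Zprime_def map_s[symmetric] by (rule subseq_map)
  show "set (rev ?s) = S" "length (rev ?s) = card S" "sorted_wrt (>) (rev ?s)"
    using fin by (simp_all add: sorted_wrt_rev)
  show "palindromic k L (rev ?s)"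
    unfolding palindromic_def
  proof (intro allI impI)
    fix i assume "i < length (rev ?s)"
    then have "?F (rev ?s ! i) = ?s ! i"
      by (metis map_c length_map nth_map)
    also have "\<dots> = rev ?s ! (length (rev ?s) - 1 - i)"
      using \<open>i < length (rev ?s)\<close> by (simp add: rev_nth)
    finally show "?F (rev ?s ! i) = rev ?s ! (length (rev ?s) - 1 - i)" .
  qed
qed

lemma palindromic_set_extension:
  assumes "palindromic_set k l B" "0 \<notin> B"
  defines "S \<equiv> wrap_digits k l ` extension_triples k B"
  shows "palindromic_set k (l + 2) S" and "card S = k * card B + k - 1" and "0 \<notin> S"
proof -
  let ?T = "extension_triples k B" and ?D = "{..<k} \<times> {..<k ^ l} \<times> {..<k}"
  let ?\<sigma> = "\<lambda>(a, y, e). (e, rev_digits k l y, a)"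
  have fin: "finite B" and B_bound: "B \<subseteq> {..<k ^ l}"
    and B_closed: "rev_digits k l ` B \<subseteq> B" and B_anti: "strict_antimono_on B (rev_digits k l)"
    using assms(1) by (simp_all add: palindromic_set_def)
  have T_box: "?T \<subseteq> ?D"
    using B_bound by (rule extension_triples_subset)
  have mono: "strict_mono_on ?D (wrap_digits k l)"
    using strict_mono_on_wrap_digits by (rule monotone_on_subset) auto
  have \<sigma>_closed: "?\<sigma> ` ?T \<subseteq> ?T" and \<sigma>_anti: "strict_antimono_on ?T ?\<sigma>"
    using extension_triples_reversal[OF B_closed B_anti assms(2)] by simp_all
  have rev_wrap: "rev_digits k (l + 2) (wrap_digits k l t) = wrap_digits k l (?\<sigma> t)" if "t \<in> ?T" for t
  proof -
    obtain a y e where t: "t = (a, y, e)"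
      by (cases t)
    have "a < k" "y < k ^ l" "e < k"
      using that T_box t by auto
    then show ?thesis
      unfolding t prod.case by (rule rev_digits_wrap_digits)
  qed
  note conjugate = strict_antimono_on_image_conjugate[of ?D "wrap_digits k l" ?T ?\<sigma> "rev_digits k (l + 2)",
      OF mono T_box \<sigma>_closed \<sigma>_anti rev_wrap]
  have "rev_digits k (l + 2) ` S \<subseteq> S"
    unfolding S_def using conjugate(1) by simp
  moreover have "strict_antimono_on S (rev_digits k (l + 2))"
    unfolding S_def using conjugate(2) by simp
  moreover have "finite S"
    using fin by (simp add: S_def extension_triples_def)
  moreover have "S \<subseteq> {..<k ^ (l + 2)}"
    unfolding S_def using image_mono[OF T_box] wrap_digits_image_subset by (rule order_trans)
  ultimately show "palindromic_set k (l + 2) S"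
    by (simp add: palindromic_set_def)
  have "inj_on (wrap_digits k l) ?D"
    using mono by (rule strict_mono_on_imp_inj_on)
  then show "card S = k * card B + k - 1"
    using card_extension_triples[OF fin assms(2)] T_box by (simp add: S_def card_image inj_on_subset)
  show "0 \<notin> S"
    unfolding S_def using B_bound assms(2) by (rule zero_notin_wrap_digits_extension_triples)
qed

theorem proposition7p2:
  fixes k l d :: nat and b :: "nat list"
  assumes "k \<ge> 2" and "l \<ge> 1"
    and "subseq b (Zprime k l)"
    and "length b = d"
    and "sorted_wrt (>) b"
    and "palindromic k l b"
    and "0 \<notin> set b"
  shows "\<exists>c. subseq c (Zprime k (l + 2)) \<and> length c = k * d + k - 1
             \<and> sorted_wrt (>) c \<and> palindromic k (l + 2) c \<and> 0 \<notin> set c"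
proof -
  have B: "palindromic_set k l (set b)"
    using assms(1,3,5,6) by (intro palindromic_set_of_list) simp_all
  have "distinct b"
    using assms(5) by (metis distinct_rev sorted_wrt_rev strict_sorted_iff)
  then have "card (set b) = d"
    using assms(4) by (simp add: distinct_card)
  let ?S = "wrap_digits k l ` extension_triples k (set b)"
  obtain c where "set c = ?S" "length c = card ?S" "subseq c (Zprime k (l + 2))"
    "sorted_wrt (>) c" "palindromic k (l + 2) c"
    using palindromic_set_enumeration[OF palindromic_set_extension(1)[OF B assms(7)]] .
  then show ?thesis
    using palindromic_set_extension(2,3)[OF B assms(7)] \<open>card (set b) = d\<close> by metis
qed

end
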